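(* Let $e_1,e_2\in[0,1)$, $p_1,p_2>0$, and let $K,L,M,N$ be the real numbers defined in the context. For $f_2\in\mathbb{R}$ define \[ \begin{split} \alpha &= p_1(1+e_2\cos f_2)\bigl(K\sin f_2 - M(e_2+\cos f_2)\bigr) + p_2e_1e_2\sin f_2, \\ \beta &= p_1(1+e_2\cos f_2)\bigl(L\sin f_2 - N(e_2+\cos f_2)\bigr), \\ \gamma &= p_2e_2\sin f_2,\\ \kappa &= -p_2e_1(L\cos f_2 + N\sin f_2), \\ \lambda &= p_2e_1(K\cos f_2 + M\sin f_2), \\ \mu &= -p_2(1+e_1^2)(L\cos f_2 + N\sin f_2),\\ \nu &= p_1e_1(1+e_2\cos f_2) + p_2(K\cos f_2 + M\sin f_2), \end{split} \] and let \[ \mathscr{T}(f_2) = \begin{pmatrix} \alpha^2+\beta^2 & 0 & \beta\kappa-\alpha\lambda & 0\\ 2\alpha\gamma & \alpha^2+\beta^2 & \beta\mu-\lambda\gamma-\alpha\nu &\beta\kappa-\alpha\lambda\\ \gamma^2-\beta^2 & 2\alpha\gamma & \beta\kappa-\gamma\nu & \beta\mu-\lambda\gamma-\alpha\nu\\ 0 & \gamma^2-\beta^2 & 0 & \beta\kappa-\gamma\nu \end{pmatrix}. \] Then $\det\mathscr{T}(f_2)$ contains the factor $\beta^2(1+e_2\cos f_2)^2$: there is a trigonometric polynomial $h(f_2)$ (a polynomial in $\cos f_2,\sin f_2$) such that $\det\mathscr{T}(f_2)=(1+e_2\cos f_2)^2\,\beta(f_2)^2\,h(f_2)$ for all $f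_2$.
   Context: Two confocal elliptic orbits are given by Keplerian elements $a_i$, $e_i$, $i_i$, $\Omega_i$, $\omega_i$ ($i=1,2$), with conic parameters $p_i=a_i(1-e_i^2)$ and true anomalies $f_1,f_2$. Define the unit vectors $\mathcal{P}=(\cos\omega_1\cos\Omega_1-\cos i_1\sin\omega_1\sin\Omega_1,\ \cos\omega_1\sin\Omega_1+\cos i_1\sin\omega_1\cos\Omega_1,\ \sin\omega_1\sin i_1)$, $\mathcal{Q}=(-\sin\omega_1\cos\Omega_1-\cos i_1\cos\omega_1\sin\Omega_1,\ -\sin\omega_1\sin\Omega_1+\cos i_1\cos\omega_1\cos\Omega_1,\ \cos\omega_1\sin i_1)$, and $\mathfrak{p},\mathfrak{q}$ by the same formulas with $(i_2,\Omega_2,\omega_2)$ in place of $(i_1,\Omega_1,\omega_1)$. Set $K=\langle\mathcal{P},\mathfrak{p}\rangle$, $L=\langle\mathcal{Q},\mathfrak{p}\rangle$, $M=\langle\mathcal{P},\mathfrak{q}\rangle$, $N=\langle\mathcal{Q},\mathfrak{q}\rangle$. The matrix $\mathscr{T}$ is the Sylvester matrix, with respect to $\cos f_1$, of the polynomials $(\alpha^2+\beta^2)\cos^2 f_1 + 2\alpha\gamma\cos f_1 + \gamma^2-\beta^2$ and $(\beta\kappa - \alpha\lambda)\cos^2 f_1 + (\beta\mu - \lambda\gamma-\alpha\nu)\cos f_1 + \beta\kappa-\gamma\nu$. *)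

theory Defs
  imports "HOL-Analysis.Analysis"
begin

text \<open>Orbital unit vectors P, Q (resp. p, q) of an orbit with inclination i,
  longitude of the ascending node Om and argument of pericentre w.\<close>
definition orbP :: "real \<Rightarrow> real \<Rightarrow> real \<Rightarrow> real^3" where
  "orbP i Om w = vector [cos w * cos Om - cos i * sin w * sin Om,
                         cos w * sin Om + cos i * sin w * cos Om,
                         sin w * sin i]"

definition orbQ :: "real \<Rightarrow> real \<Rightarrow> real \<Rightarrow> real^3" where
  "orbQ i Om w = vector [- sin w * cos Om - cos i * cos w * sin Om,
                         - sin w * sin Om + cos i * cos w * cos Om,
                         cos w * sin i]"

definition trig_poly :: "(real \<Rightarrow> real) \<Rightarrow> bool" where
  "trig_poly h \<longleftrightarrow> (\<exists>n (c :: nat \<Rightarrow> nat \<Rightarrow> real).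
       \<forall>x. h x = (\<Sum>i<n. \<Sum>j<n. c i j * cos x ^ i * sin x ^ j))"

definition c_alpha :: "real \<Rightarrow> real \<Rightarrow> real \<Rightarrow> real \<Rightarrow> real \<Rightarrow> real \<Rightarrow> real \<Rightarrow> real \<Rightarrow> real \<Rightarrow> real" where
  "c_alpha K L M N e1 e2 p1 p2 f2 =
     p1 * (1 + e2 * cos f2) * (K * sin f2 - M * (e2 + cos f2)) + p2 * e1 * e2 * sin f2"

definition c_beta :: "real \<Rightarrow> real \<Rightarrow> real \<Rightarrow> real \<Rightarrow> real \<Rightarrow> real \<Rightarrow> real \<Rightarrow> real \<Rightarrow> real \<Rightarrow> real" where
  "c_beta K L M N e1 e2 p1 p2 f2 = p1 * (1 + e2 * cos f2) * (L * sin f2 - N * (e2 + cos f2))"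

definition c_gamma :: "real \<Rightarrow> real \<Rightarrow> real \<Rightarrow> real \<Rightarrow> real \<Rightarrow> real \<Rightarrow> real \<Rightarrow> real \<Rightarrow> real \<Rightarrow> real" where
  "c_gamma K L M N e1 e2 p1 p2 f2 = p2 * e2 * sin f2"

definition c_kappa :: "real \<Rightarrow> real \<Rightarrow> real \<Rightarrow> real \<Rightarrow> real \<Rightarrow> real \<Rightarrow> real \<Rightarrow> real \<Rightarrow> real \<Rightarrow> real" where
  "c_kappa K L M N e1 e2 p1 p2 f2 = - p2 * e1 * (L * cos f2 + N * sin f2)"

definition c_lambda :: "real \<Rightarrow> real \<Rightarrow> real \<Rightarrow> real \<Rightarrow> real \<Rightarrow> real \<Rightarrow> real \<Rightarrow> real \<Rightarrow> real \<Rightarrow> real" where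
  "c_lambda K L M N e1 e2 p1 p2 f2 = p2 * e1 * (K * cos f2 + M * sin f2)"

definition c_mu :: "real \<Rightarrow> real \<Rightarrow> real \<Rightarrow> real \<Rightarrow> real \<Rightarrow> real \<Rightarrow> real \<Rightarrow> real \<Rightarrow> real \<Rightarrow> real" where
  "c_mu K L M N e1 e2 p1 p2 f2 = - p2 * (1 + e1^2) * (L * cos f2 + N * sin f2)"

definition c_nu :: "real \<Rightarrow> real \<Rightarrow> real \<Rightarrow> real \<Rightarrow> real \<Rightarrow> real \<Rightarrow> real \<Rightarrow> real \<Rightarrow> real \<Rightarrow> real" where
  "c_nu K L M N e1 e2 p1 p2 f2 = p1 * e1 * (1 + e2 * cos f2) + p2 * (K * cos f2 + M * sin f2)"

definition T_mat :: "real \<Rightarrow> real \<Rightarrow> real \<Rightarrow> real \<Rightarrow> real \<Rightarrow> real \<Rightarrow> real \<Rightarrow> real \<Rightarrow> real \<Rightarrow> real^4^4" where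
  "T_mat K L M N e1 e2 p1 p2 f2 =
    (let a = c_alpha K L M N e1 e2 p1 p2 f2; b = c_beta K L M N e1 e2 p1 p2 f2;
         g = c_gamma K L M N e1 e2 p1 p2 f2; k = c_kappa K L M N e1 e2 p1 p2 f2;
         l = c_lambda K L M N e1 e2 p1 p2 f2; m = c_mu K L M N e1 e2 p1 p2 f2;
         n = c_nu K L M N e1 e2 p1 p2 f2
     in vector [
       vector [a^2 + b^2, 0, b*k - a*l, 0],
       vector [2*a*g, a^2 + b^2, b*m - l*g - a*n, b*k - a*l],
       vector [g^2 - b^2, 2*a*g, b*k - g*n, b*m - l*g - a*n],
       vector [0, g^2 - b^2, 0, b*k - g*n]])"

end

theory Submission
  imports Defs
begin

(* The matrix is the Sylvester matrix of two quadratics in cos f1, so its determinant is their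
   resultant (AF - CD)^2 - (AE - BD)(BF - CE). The first quadratic is
   (alpha x + gamma)^2 - beta^2 (1 - x^2) and, modulo beta, the second is
   -(alpha x + gamma)(lambda x + nu); hence the resultant is beta^2 times a polynomial Q in
   alpha, ..., nu. For the orbital coefficients, beta is a multiple of w = 1 + e2 cos f2, and
   where w = 0 both quadratics become proportional to (1 + e1 x)^2, so Q is w^2 times a polynomial
   in cos f2 and sin f2. *)

lemma vector_4 [simp]:
  "(vector [x, y, z, u] :: ('a::zero)^4) $ 1 = x"
  "(vector [x, y, z, u] :: ('a::zero)^4) $ 2 = y"
  "(vector [x, y, z, u] :: ('a::zero)^4) $ 3 = z"
  "(vector [x, y, z, u] :: ('a::zero)^4) $ 4 = u"
  unfolding vector_def by simp_all

lemma det_4: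
  "det (A::'a::comm_ring_1^4^4) =
    A$1$1 * A$2$2 * A$3$3 * A$4$4 - A$1$1 * A$2$2 * A$3$4 * A$4$3
  - A$1$1 * A$2$3 * A$3$2 * A$4$4 + A$1$1 * A$2$3 * A$3$4 * A$4$2
  + A$1$1 * A$2$4 * A$3$2 * A$4$3 - A$1$1 * A$2$4 * A$3$3 * A$4$2
  - A$1$2 * A$2$1 * A$3$3 * A$4$4 + A$1$2 * A$2$1 * A$3$4 * A$4$3
  + A$1$2 * A$2$3 * A$3$1 * A$4$4 - A$1$2 * A$2$3 * A$3$4 * A$4$1
  - A$1$2 * A$2$4 * A$3$1 * A$4$3 + A$1$2 * A$2$4 * A$3$3 * A$4$1
  + A$1$3 * A$2$1 * A$3$2 * A$4$4 - A$1$3 * A$2$1 * A$3$4 * A$4$2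
  - A$1$3 * A$2$2 * A$3$1 * A$4$4 + A$1$3 * A$2$2 * A$3$4 * A$4$1
  + A$1$3 * A$2$4 * A$3$1 * A$4$2 - A$1$3 * A$2$4 * A$3$2 * A$4$1
  - A$1$4 * A$2$1 * A$3$2 * A$4$3 + A$1$4 * A$2$1 * A$3$3 * A$4$2
  + A$1$4 * A$2$2 * A$3$1 * A$4$3 - A$1$4 * A$2$2 * A$3$3 * A$4$1
  - A$1$4 * A$2$3 * A$3$1 * A$4$2 + A$1$4 * A$2$3 * A$3$2 * A$4$1"
proof -
  have f234: "finite {2::4, 3, 4}" "1 \<notin> {2::4, 3, 4}" by auto
  have f34: "finite {3::4, 4}" "2 \<notin> {3::4, 4}" by auto
  have f4: "finite {4::4}" "3 \<notin> {4::4}" by auto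
  show ?thesis
    unfolding det_def UNIV_4
    unfolding sum_over_permutations_insert[OF f234]
    unfolding sum_over_permutations_insert[OF f34]
    unfolding sum_over_permutations_insert[OF f4]
    unfolding permutes_sing
    by (simp add: sign_swap_id permutation_swap_id permutation_compose sign_compose sign_id
        swap_id_eq algebra_simps)
qed

definition quadratic_resultant :: "'a::idom \<Rightarrow> 'a \<Rightarrow> 'a \<Rightarrow> 'a \<Rightarrow> 'a \<Rightarrow> 'a \<Rightarrow> 'a" where
  "quadratic_resultant A B C D E F = (A * F - C * D)^2 - (A * E - B * D) * (B * F - C * E)"

lemma det_sylvester_quadratics:
  "det (vector [vector [A, 0, D, 0], vector [B, A, E, D], vector [C, B, F, E], vector [0, C, 0, F]]
      :: 'a::idom^4^4) = quadratic_resultant A B C D E F"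
  unfolding det_4 vector_4 quadratic_resultant_def by algebra

(* Both cofactors were obtained by polynomial division. *)
definition resultant_cofactor :: "'a::idom \<Rightarrow> 'a \<Rightarrow> 'a \<Rightarrow> 'a \<Rightarrow> 'a \<Rightarrow> 'a \<Rightarrow> 'a \<Rightarrow> 'a" where
  "resultant_cofactor a b g k l m n = g^4 * l^2 + g^4 * k^2 - 2 * b * g^3 * l * m
     + 2 * b * g^3 * k * n + b^2 * g^2 * n^2 + b^2 * g^2 * m^2 - b^2 * g^2 * l^2
     - 4 * b^2 * g^2 * k^2 + 2 * b^3 * g * l * m - 4 * b^3 * g * k * n - b^4 * m^2
     + 4 * b^4 * k^2 - 2 * a * g^3 * l * n - 2 * a * g^3 * k * m
     + 6 * a * b * g^2 * k * l + 2 * a * b^3 * m * n - 4 * a * b^3 * k * l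
     + a^2 * g^2 * n^2 + a^2 * g^2 * m^2 - a^2 * g^2 * l^2 + 2 * a^2 * g^2 * k^2
     - 6 * a^2 * b * g * k * n - a^2 * b^2 * n^2 - a^2 * b^2 * m^2 + a^2 * b^2 * l^2
     + 4 * a^2 * b^2 * k^2 + 2 * a^3 * g * l * n - 2 * a^3 * g * k * m
     + 2 * a^3 * b * m * n - 2 * a^3 * b * k * l - a^4 * n^2 + a^4 * k^2"

definition orbit_cofactor :: "'a::idom \<Rightarrow> 'a \<Rightarrow> 'a \<Rightarrow> 'a \<Rightarrow> 'a \<Rightarrow> 'a \<Rightarrow> 'a \<Rightarrow> 'a \<Rightarrow> 'a" where
  "orbit_cofactor g n k A B w p e = 2 * k * A * B^3 * w^3 * p^5 * e
     + 2 * k * A * B^3 * w^3 * p^5 * e^3 + 2 * k * A^3 * B * w^3 * p^5 * e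
     + 2 * k * A^3 * B * w^3 * p^5 * e^3 - k^2 * B^4 * w^2 * p^4
     + 2 * k^2 * B^4 * w^2 * p^4 * e^2 - k^2 * B^4 * w^2 * p^4 * e^4
     - k^2 * A^2 * B^2 * w^2 * p^4 + 2 * k^2 * A^2 * B^2 * w^2 * p^4 * e^2
     - k^2 * A^2 * B^2 * w^2 * p^4 * e^4 + k^2 * A^4 * w^2 * p^4 * e^2
     - 2 * n * A^2 * B^2 * w^3 * p^5 * e - 2 * n * A^4 * w^3 * p^5 * e
     + 2 * n * k * A * B^3 * w^2 * p^4 - 2 * n * k * A * B^3 * w^2 * p^4 * e^2
     + 2 * n * k * A^3 * B * w^2 * p^4 - n^2 * A^2 * B^2 * w^2 * p^4
     + n^2 * A^2 * B^2 * w^2 * p^4 * e^2 - n^2 * A^4 * w^2 * p^4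
     - 2 * g * A * B^2 * w^3 * p^5 * e^3 - 4 * g * A^3 * w^3 * p^5 * e^3
     - 2 * g * k * B^3 * w^2 * p^4 * e^2 + 2 * g * k * B^3 * w^2 * p^4 * e^4
     + 6 * g * k * A^2 * B * w^2 * p^4 * e^4 - 2 * g * k^2 * A * B^2 * w * p^3 * e
     + 4 * g * k^2 * A * B^2 * w * p^3 * e^3 - 2 * g * k^2 * A * B^2 * w * p^3 * e^5
     - 2 * g * k^2 * A^3 * w * p^3 * e + 2 * g * k^2 * A^3 * w * p^3 * e^3
     - 4 * g * n * A * B^2 * w^2 * p^4 * e^2 - 6 * g * n * A^3 * w^2 * p^4 * e^2
     - 2 * g * n^2 * A * B^2 * w * p^3 * e + 2 * g * n^2 * A * B^2 * w * p^3 * e^3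
     - 2 * g * n^2 * A^3 * w * p^3 * e + g^2 * B^2 * w^2 * p^4 * e^2
     - g^2 * B^2 * w^2 * p^4 * e^4 + g^2 * A^2 * w^2 * p^4 * e^2
     - 6 * g^2 * A^2 * w^2 * p^4 * e^4 - 6 * g^2 * k * A * B * w * p^3 * e^3
     + 6 * g^2 * k * A * B * w * p^3 * e^5 + g^2 * k^2 * B^2 * p^2
     - 3 * g^2 * k^2 * B^2 * p^2 * e^2 + 3 * g^2 * k^2 * B^2 * p^2 * e^4
     - g^2 * k^2 * B^2 * p^2 * e^6 + g^2 * k^2 * A^2 * p^2
     - 2 * g^2 * k^2 * A^2 * p^2 * e^2 + g^2 * k^2 * A^2 * p^2 * e^4
     + 2 * g^2 * n * B^2 * w * p^3 * e - 2 * g^2 * n * B^2 * w * p^3 * e^3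
     + 2 * g^2 * n * A^2 * w * p^3 * e - 6 * g^2 * n * A^2 * w * p^3 * e^3
     + g^2 * n^2 * B^2 * p^2 - 2 * g^2 * n^2 * B^2 * p^2 * e^2
     + g^2 * n^2 * B^2 * p^2 * e^4 + g^2 * n^2 * A^2 * p^2
     - g^2 * n^2 * A^2 * p^2 * e^2 + 2 * g^3 * A * w * p^3 * e^3
     - 4 * g^3 * A * w * p^3 * e^5 + 2 * g^3 * k * B * p^2 * e^2
     - 4 * g^3 * k * B * p^2 * e^4 + 2 * g^3 * k * B * p^2 * e^6
     + 2 * g^3 * n * A * p^2 * e^2 - 2 * g^3 * n * A * p^2 * e^4 + g^4 * p^2 * e^4
     - g^4 * p^2 * e^6 - A^2 * B^2 * w^4 * p^6 * e^2 - A^4 * w^4 * p^6 * e^2"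

lemma quadratic_resultant_factor_sq:
  fixes a b g k l m n :: "'a::idom"
  shows "quadratic_resultant (a^2 + b^2) (2*a*g) (g^2 - b^2) (b*k - a*l) (b*m - l*g - a*n) (b*k - g*n)
    = b^2 * resultant_cofactor a b g k l m n"
  unfolding quadratic_resultant_def resultant_cofactor_def by algebra

lemma resultant_cofactor_orbit:
  fixes g n k A B w p e :: "'a::idom"
  shows "resultant_cofactor (e*g + p*w*A) (p*w*B) g (e*k) (e*n) ((1 + e^2)*k) (n + p*e*w)
     = w^2 * orbit_cofactor g n k A B w p e"
  unfolding resultant_cofactor_def orbit_cofactor_def by algebra

definition trig_sum :: "nat \<Rightarrow> (nat \<Rightarrow> nat \<Rightarrow> real) \<Rightarrow> real \<Rightarrow> real" where
  "trig_sum n c x = (\<Sum>i<n. \<Sum>j<n. c i j * cos x ^ i * sin x ^ j)"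

lemma trig_poly_iff_trig_sum: "trig_poly h \<longleftrightarrow> (\<exists>n c. h = trig_sum n c)"
  by (simp add: trig_poly_def trig_sum_def fun_eq_iff)

lemma sum_lessThan_if_less:
  fixes n m :: nat
  assumes "n \<le> m"
  shows "(\<Sum>i<m. if i < n then f i else 0) = (\<Sum>i<n. f i :: 'a::comm_monoid_add)"
proof -
  have "{..<m} \<inter> {..<n} = {..<n}"
    using assms by auto
  then show ?thesis
    using sum.inter_restrict[OF finite_lessThan, of f m "{..<n}"] by simp
qed

lemma trig_sum_pad:
  fixes n m :: nat
  assumes "n \<le> m"
  shows "trig_sum n c = trig_sum m (\<lambda>i j. if i < n \<and> j < n then c i j else 0)"
proof
  fix x
  have "trig_sum m (\<lambda>i j. if i < n \<and> j < n then c i j else 0) x =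
      (\<Sum>i<m. if i < n then \<Sum>j<m. if j < n then c i j * cos x ^ i * sin x ^ j else 0 else 0)"
    unfolding trig_sum_def by (auto intro!: sum.cong)
  also have "\<dots> = trig_sum n c x"
    using assms by (simp add: sum_lessThan_if_less trig_sum_def)
  finally show "trig_sum n c x = trig_sum m (\<lambda>i j. if i < n \<and> j < n then c i j else 0) x" ..
qed

lemma trig_sum_add: "trig_sum n c x + trig_sum n d x = trig_sum n (\<lambda>i j. c i j + d i j) x"
  by (simp add: trig_sum_def sum.distrib[symmetric] distrib_right)

lemma trig_sum_monomial:
  assumes "i < n" "j < n"
  shows "trig_sum n (\<lambda>a b. if a = i \<and> b = j then c else 0) x = c * cos x ^ i * sin x ^ j"
proof -
  have "(\<Sum>b<n. (if a = i \<and> b = j then c else 0) * cos x ^ a * sin x ^ b) =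
      (if a = i then c * cos x ^ a * sin x ^ j else 0)" for a
    using assms by (cases "a = i") (simp_all add: if_distrib[of "\<lambda>t. t * _"] cong: if_cong)
  then show ?thesis
    unfolding trig_sum_def using assms by simp
qed

lemma trig_poly_monomial: "trig_poly (\<lambda>x. c * cos x ^ i * sin x ^ j)"
proof -
  have "(\<lambda>x. c * cos x ^ i * sin x ^ j) =
      trig_sum (Suc (max i j)) (\<lambda>a b. if a = i \<and> b = j then c else 0)"
    by (simp add: fun_eq_iff trig_sum_monomial less_Suc_eq_le)
  then show ?thesis
    unfolding trig_poly_iff_trig_sum by blast
qed

lemma trig_poly_const: "trig_poly (\<lambda>x. c)"
  using trig_poly_monomial[of c 0 0] by simp

lemma trig_poly_cos: "trig_poly (\<lambda>x. cos x)"
  using trig_poly_monomial[of 1 1 0] by simp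

lemma trig_poly_sin: "trig_poly (\<lambda>x. sin x)"
  using trig_poly_monomial[of 1 0 1] by simp

lemma trig_poly_add:
  assumes "trig_poly f" "trig_poly g"
  shows "trig_poly (\<lambda>x. f x + g x)"
proof -
  obtain n1 c1 n2 c2 where "f = trig_sum n1 c1" "g = trig_sum n2 c2"
    using assms by (auto simp: trig_poly_iff_trig_sum)
  then have "f = trig_sum (n1 + n2) (\<lambda>i j. if i < n1 \<and> j < n1 then c1 i j else 0)"
      and "g = trig_sum (n1 + n2) (\<lambda>i j. if i < n2 \<and> j < n2 then c2 i j else 0)"
    by (simp_all add: trig_sum_pad)
  then have "(\<lambda>x. f x + g x) = trig_sum (n1 + n2) (\<lambda>i j.
      (if i < n1 \<and> j < n1 then c1 i j else 0) + (if i < n2 \<and> j < n2 then c2 i j else 0))"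
    by (simp add: fun_eq_iff trig_sum_add)
  then show ?thesis
    unfolding trig_poly_iff_trig_sum by blast
qed

lemma trig_poly_sum:
  assumes "finite S" "\<And>s. s \<in> S \<Longrightarrow> trig_poly (f s)"
  shows "trig_poly (\<lambda>x. \<Sum>s\<in>S. f s x)"
  using assms
proof (induction S rule: finite_induct)
  case empty
  then show ?case
    using trig_poly_const[of 0] by simp
next
  case (insert s S)
  then show ?case
    using trig_poly_add[of "f s" "\<lambda>x. \<Sum>s\<in>S. f s x"] by simp
qed

lemma trig_poly_mult:
  assumes "trig_poly f" "trig_poly g"
  shows "trig_poly (\<lambda>x. f x * g x)"
proof -
  obtain n1 c1 n2 c2 where f: "f = trig_sum n1 c1" and g: "g = trig_sum n2 c2"
    using assms by (auto simp: trig_poly_iff_trig_sum)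
  have "f x * g x = (\<Sum>i<n1. \<Sum>k<n2. \<Sum>j<n1. \<Sum>l<n2.
      (c1 i j * c2 k l) * cos x ^ (i + k) * sin x ^ (j + l))" for x
    unfolding f g trig_sum_def sum_product
    by (intro sum.cong refl) (simp add: power_add algebra_simps)
  moreover have "trig_poly (\<lambda>x. \<Sum>i<n1. \<Sum>k<n2. \<Sum>j<n1. \<Sum>l<n2.
      (c1 i j * c2 k l) * cos x ^ (i + k) * sin x ^ (j + l))"
    by (intro trig_poly_sum trig_poly_monomial finite_lessThan)
  ultimately show ?thesis
    by simp
qed

lemma trig_poly_uminus: "trig_poly f \<Longrightarrow> trig_poly (\<lambda>x. - f x)"
  using trig_poly_mult[OF trig_poly_const[of "-1"]] by simp

lemma trig_poly_diff: "trig_poly f \<Longrightarrow> trig_poly g \<Longrightarrow> trig_poly (\<lambda>x. f x - g x)"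
  using trig_poly_add[OF _ trig_poly_uminus[of g]] by simp

lemma trig_poly_power:
  assumes "trig_poly f"
  shows "trig_poly (\<lambda>x. f x ^ n)"
proof (induction n)
  case 0
  then show ?case
    using trig_poly_const[of 1] by simp
next
  case (Suc n)
  then show ?case
    using trig_poly_mult[OF assms Suc] by simp
qed

lemmas trig_poly_intros =
  trig_poly_const trig_poly_cos trig_poly_sin trig_poly_add trig_poly_diff trig_poly_uminus
  trig_poly_mult trig_poly_power


lemma det_T_mat:
  "det (T_mat K L M N e1 e2 p1 p2 f2) = c_beta K L M N e1 e2 p1 p2 f2 ^ 2 *
     resultant_cofactor (c_alpha K L M N e1 e2 p1 p2 f2) (c_beta K L M N e1 e2 p1 p2 f2)
       (c_gamma K L M N e1 e2 p1 p2 f2) (c_kappa K L M N e1 e2 p1 p2 f2)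
       (c_lambda K L M N e1 e2 p1 p2 f2) (c_mu K L M N e1 e2 p1 p2 f2)
       (c_nu K L M N e1 e2 p1 p2 f2)"
  unfolding T_mat_def Let_def det_sylvester_quadratics quadratic_resultant_factor_sq ..

definition T_cofactor :: "real \<Rightarrow> real \<Rightarrow> real \<Rightarrow> real \<Rightarrow> real \<Rightarrow> real \<Rightarrow> real \<Rightarrow> real \<Rightarrow> real \<Rightarrow> real" where
  "T_cofactor K L M N e1 e2 p1 p2 f2 =
     orbit_cofactor (p2 * e2 * sin f2) (p2 * (K * cos f2 + M * sin f2))
       (- p2 * (L * cos f2 + N * sin f2)) (K * sin f2 - M * (e2 + cos f2))
       (L * sin f2 - N * (e2 + cos f2)) (1 + e2 * cos f2) p1 e1"

lemma det_T_mat_eq: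
  "det (T_mat K L M N e1 e2 p1 p2 f2) =
     (1 + e2 * cos f2)^2 * c_beta K L M N e1 e2 p1 p2 f2 ^ 2 * T_cofactor K L M N e1 e2 p1 p2 f2"
proof -
  define g n k A B w where "g = p2 * e2 * sin f2" and "n = p2 * (K * cos f2 + M * sin f2)"
    and "k = - p2 * (L * cos f2 + N * sin f2)" and "A = K * sin f2 - M * (e2 + cos f2)"
    and "B = L * sin f2 - N * (e2 + cos f2)" and "w = 1 + e2 * cos f2"
  have "c_alpha K L M N e1 e2 p1 p2 f2 = e1 * g + p1 * w * A"
    and "c_beta K L M N e1 e2 p1 p2 f2 = p1 * w * B"
    and "c_gamma K L M N e1 e2 p1 p2 f2 = g"
    and "c_kappa K L M N e1 e2 p1 p2 f2 = e1 * k"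
    and "c_lambda K L M N e1 e2 p1 p2 f2 = e1 * n"
    and "c_mu K L M N e1 e2 p1 p2 f2 = (1 + e1^2) * k"
    and "c_nu K L M N e1 e2 p1 p2 f2 = n + p1 * e1 * w"
    by (simp_all add: c_alpha_def c_beta_def c_gamma_def c_kappa_def c_lambda_def c_mu_def
        c_nu_def g_def n_def k_def A_def B_def w_def algebra_simps)
  then have "det (T_mat K L M N e1 e2 p1 p2 f2) =
      c_beta K L M N e1 e2 p1 p2 f2 ^ 2 * (w^2 * orbit_cofactor g n k A B w p1 e1)"
    by (simp only: det_T_mat resultant_cofactor_orbit)
  then show ?thesis
    by (simp add: T_cofactor_def g_def n_def k_def A_def B_def w_def)
qed

lemma trig_poly_T_cofactor: "trig_poly (T_cofactor K L M N e1 e2 p1 p2)"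
  unfolding T_cofactor_def orbit_cofactor_def by (intro trig_poly_intros)

theorem mainTheorem2:
  fixes e1 e2 p1 p2 i1 Om1 w1 i2 Om2 w2 :: real
  assumes "0 \<le> e1" "e1 < 1" "0 \<le> e2" "e2 < 1" "0 < p1" "0 < p2"
  shows "let K = orbP i1 Om1 w1 \<bullet> orbP i2 Om2 w2;
             L = orbQ i1 Om1 w1 \<bullet> orbP i2 Om2 w2;
             M = orbP i1 Om1 w1 \<bullet> orbQ i2 Om2 w2;
             N = orbQ i1 Om1 w1 \<bullet> orbQ i2 Om2 w2
         in \<exists>h. trig_poly h \<and>
              (\<forall>f2. det (T_mat K L M N e1 e2 p1 p2 f2) =
                     (1 + e2 * cos f2)^2 * (c_beta K L M N e1 e2 p1 p2 f2)^2 * h f2)"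
  unfolding Let_def using trig_poly_T_cofactor det_T_mat_eq by blast

end
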